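(* Fix a parameter space $W$, a data space $X$, an update rule $g: W\times X\to W$, a metric $d$ on $W$ and initial parameters $\mathbf{w}_0\in W$. Then the relation on datasets $D\subseteq X$ given by "$D$ and $D'$ are forgeable with $\epsilon=0$" is an equivalence relation.
   Context: A valid $(g,d,\epsilon)$ log is a sequence $\{(\mathbf{w}_i,\mathbf{x}_i)\}_{i\in J}$ ($J$ a countable index set, consecutive indices) such that $d(\mathbf{w}_{i+1}, g(\mathbf{w}_i,\mathbf{x}_i))\le \epsilon$ for all $i\in J$. For a dataset $D$, $H_{D,g,d,\epsilon}$ is the set of all valid $(g,d,\epsilon)$ logs starting from $\mathbf{w}_0$ whose data points all lie in $D$. A forging map from $D$ to $D'$ (with $\epsilon$) is a map $B: H_{D,g,d,0}\to H_{D',g,d,\epsilon}$ with $B(\{(\mathbf{w}_i,\mathbf{x}_i)\}_{i\in J})=\{(\mathbf{w}_i,\tilde{\mathbf{x}}_i)\}_{i\in J}$, $\tilde{\mathbf{x}}_i\in D'$, the output being a valid $(g,d,\epsilon)$ log. $D$ and $D'$ are forgeable with $\epsilon$ if there is a forging map from $D$ to $D'$ and one from $D'$ to $D$, both with $\epsilon$. *)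

theory Defs
  imports "HOL-Analysis.Analysis"
begin

text \<open>A log is an index set J (an initial segment of the naturals: consecutive
indices starting at 0, finite or all of nat) together with the entries
(w_i, x_i) for i in J; values of the function outside J are irrelevant.\<close>

type_synonym ('w, 'x) tlog = "nat set \<times> (nat \<Rightarrow> 'w \<times> 'x)"

definition consecutive_idx :: "nat set \<Rightarrow> bool" where
  "consecutive_idx J \<longleftrightarrow> (\<forall>i j. j \<in> J \<longrightarrow> i \<le> j \<longrightarrow> i \<in> J)"

definition valid_log ::
  "('w::metric_space \<Rightarrow> 'x \<Rightarrow> 'w) \<Rightarrow> real \<Rightarrow> ('w, 'x) tlog \<Rightarrow> bool" where
  "valid_log g \<epsilon> L \<longleftrightarrow> consecutive_idx (fst L) \<and>
     (\<forall>i. i \<in> fst L \<longrightarrow> Suc i \<in> fst L \<longrightarrow>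
        dist (fst (snd L (Suc i))) (g (fst (snd L i)) (snd (snd L i))) \<le> \<epsilon>)"

definition H :: "('w::metric_space \<Rightarrow> 'x \<Rightarrow> 'w) \<Rightarrow> 'w \<Rightarrow> real \<Rightarrow> 'x set \<Rightarrow> ('w, 'x) tlog set" where
  "H g w0 \<epsilon> D = {L. valid_log g \<epsilon> L \<and> 0 \<in> fst L \<and> fst (snd L 0) = w0 \<and>
      (\<forall>i\<in>fst L. snd (snd L i) \<in> D)}"

definition forging_map ::
  "('w::metric_space \<Rightarrow> 'x \<Rightarrow> 'w) \<Rightarrow> 'w \<Rightarrow> real \<Rightarrow> 'x set \<Rightarrow> 'x set
     \<Rightarrow> (('w, 'x) tlog \<Rightarrow> ('w, 'x) tlog) \<Rightarrow> bool" where
  "forging_map g w0 \<epsilon> D D' B \<longleftrightarrow>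
     (\<forall>L \<in> H g w0 0 D. B L \<in> H g w0 \<epsilon> D' \<and> fst (B L) = fst L \<and>
        (\<forall>i \<in> fst L. fst (snd (B L) i) = fst (snd L i)))"

definition forgeable ::
  "('w::metric_space \<Rightarrow> 'x \<Rightarrow> 'w) \<Rightarrow> 'w \<Rightarrow> real \<Rightarrow> 'x set \<Rightarrow> 'x set \<Rightarrow> bool" where
  "forgeable g w0 \<epsilon> D D' \<longleftrightarrow>
     (\<exists>B. forging_map g w0 \<epsilon> D D' B) \<and> (\<exists>B. forging_map g w0 \<epsilon> D' D B)"

end

theory Submission
  imports Defs
begin

lemma H_mono:
  assumes "\<epsilon> \<le> \<epsilon>'"
  shows "H g w0 \<epsilon> D \<subseteq> H g w0 \<epsilon>' D"
  using assms unfolding H_def valid_log_def by (auto intro: order_trans)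

lemma forging_map_id:
  assumes "0 \<le> \<epsilon>"
  shows "forging_map g w0 \<epsilon> D D id"
  using H_mono[OF assms] unfolding forging_map_def by auto

lemma forging_map_comp:
  assumes "forging_map g w0 0 D1 D2 B1" and "forging_map g w0 \<epsilon> D2 D3 B2"
  shows "forging_map g w0 \<epsilon> D1 D3 (B2 \<circ> B1)"
  using assms unfolding forging_map_def by fastforce

lemma forgeable_refl:
  assumes "0 \<le> \<epsilon>"
  shows "forgeable g w0 \<epsilon> D D"
  using forging_map_id[OF assms] unfolding forgeable_def by blast

lemma forgeable_sym:
  assumes "forgeable g w0 \<epsilon> D D'"
  shows "forgeable g w0 \<epsilon> D' D"
  using assms unfolding forgeable_def by blast

lemma forgeable_trans:
  assumes "forgeable g w0 0 D1 D2" and "forgeable g w0 0 D2 D3"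
  shows "forgeable g w0 0 D1 D3"
  using assms forging_map_comp unfolding forgeable_def by blast

theorem lemma2:
  fixes g :: "'w::metric_space \<Rightarrow> 'x \<Rightarrow> 'w" and w0 :: 'w
  shows "equiv (UNIV :: 'x set set) {(D, D'). forgeable g w0 0 D D'}"
proof (rule equivI)
  show "refl_on UNIV {(D, D'). forgeable g w0 0 D D'}"
    by (rule refl_onI) (auto intro: forgeable_refl)
  show "sym {(D, D'). forgeable g w0 0 D D'}"
    by (rule symI) (auto intro: forgeable_sym)
  show "trans {(D, D'). forgeable g w0 0 D D'}"
    by (rule transI) (auto intro: forgeable_trans)
qed simp

end
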